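(* Consider a Markov decision process with continuous state space $\mathcal{S}$, continuous action space $\mathcal{A}$, transition density $p(\mathbf{s}'|\mathbf{s},\mathbf{a})$ and discount factor $\gamma\in(0,1)$, and let $r_1,r_2$ be bounded reward functions with optimal soft Q-functions (temperature $1$) $Q_1^*, Q_2^*$ and optimal soft policies $\pi_i^*(\mathbf{a}|\mathbf{s})\propto\exp(Q_i^*(\mathbf{s},\mathbf{a}))$. Let $Q_\Sigma=\frac12(Q_1^*+Q_2^* )$, $r_\mathcal{C}=\frac12(r_1+r_2)$, let $Q_\mathcal{C}^*$ be the optimal soft Q-function for $r_\mathcal{C}$, and let $C^*$ be the fixed point of $$C(\mathbf{s},\mathbf{a}) \leftarrow \gamma\, \mathbb{E}_{\mathbf{s}'\sim p(\mathbf{s}'|\mathbf{s},\mathbf{a})}\Big[ D_{1/2}\big(\pi_1^*(\cdot|\mathbf{s}')\,\|\,\pi_2^*(\cdot|\mathbf{s}')\big) + \max_{\mathbf{a}'\in\mathcal{A}} C(\mathbf{s}',\mathbf{a}')\Big].$$ Define $V_\Sigma(\mathbf{s}) = \log\int_{\mathcal{A}}\exp(Q_\Sigma(\mathbf{s},\mathbf{a}))\,d\mathbf{a}$ and $V_\mathcal{C}^*(\mathbf{s}) = \log\int_{\mathcal{A}}\exp(Q_\mathcal{C}^*(\mathbf{s},\mathbf{a}))\,d\mathbf{a}$. Then for all $\mathbf{s}\in\mathcal{S}$, $$V_\Sigma(\mathbf{s}) \ge V_\mathcal{C}^*(\mathbf{s}) \ge V_\Sigma(\mathbf{s}) - \max_{\mathbf{a}}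 C^*(\mathbf{s},\mathbf{a}).$$
   Context: Soft (maximum-entropy) reinforcement learning with temperature $1$: for a bounded reward $r$, the soft Bellman backup maps a bounded $Q$ to $r(\mathbf{s},\mathbf{a}) + \gamma\,\mathbb{E}_{\mathbf{s}'\sim p(\cdot|\mathbf{s},\mathbf{a})}[\log\int_{\mathcal{A}}\exp(Q(\mathbf{s}',\mathbf{a}'))\,d\mathbf{a}']$; the optimal soft Q-function for $r$ is its unique fixed point, and the optimal soft policy is proportional to $\exp$ of it. $D_{1/2}(p\|q) = -2\log\int\sqrt{p q}$ is the Rényi divergence of order $1/2$. *)

theory Defs
  imports "HOL-Analysis.Analysis"
begin

text \<open>States live in a measure space SM, actions in a measure space AM
  (the base measure "d a" of the action integrals); the transition
  p s a s' is a probability density w.r.t. SM.\<close>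

definition soft_V :: "'a measure \<Rightarrow> ('s \<Rightarrow> 'a \<Rightarrow> real) \<Rightarrow> 's \<Rightarrow> real" where
  "soft_V AM Q s = ln (\<integral>a. exp (Q s a) \<partial>AM)"

definition trans_exp ::
  "'s measure \<Rightarrow> ('s \<Rightarrow> 'a \<Rightarrow> 's \<Rightarrow> real) \<Rightarrow> 's \<Rightarrow> 'a \<Rightarrow> ('s \<Rightarrow> real) \<Rightarrow> real" where
  "trans_exp SM p s a f = (\<integral>s'. p s a s' * f s' \<partial>SM)"

definition transition_density ::
  "'s measure \<Rightarrow> 'a measure \<Rightarrow> ('s \<Rightarrow> 'a \<Rightarrow> 's \<Rightarrow> real) \<Rightarrow> bool" where
  "transition_density SM AM p \<longleftrightarrow>
     (\<forall>s\<in>space SM. \<forall>a\<in>space AM.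
        p s a \<in> borel_measurable SM \<and> (\<forall>s'\<in>space SM. 0 \<le> p s a s') \<and>
        integrable SM (p s a) \<and> (\<integral>s'. p s a s' \<partial>SM) = 1)"

definition bounded_fun2 :: "('s \<Rightarrow> 'a \<Rightarrow> real) \<Rightarrow> 's set \<Rightarrow> 'a set \<Rightarrow> bool" where
  "bounded_fun2 f S A \<longleftrightarrow> (\<exists>B. \<forall>s\<in>S. \<forall>a\<in>A. \<bar>f s a\<bar> \<le> B)"

definition soft_backup ::
  "'s measure \<Rightarrow> 'a measure \<Rightarrow> ('s \<Rightarrow> 'a \<Rightarrow> 's \<Rightarrow> real) \<Rightarrow> real \<Rightarrow>
   ('s \<Rightarrow> 'a \<Rightarrow> real) \<Rightarrow> ('s \<Rightarrow> 'a \<Rightarrow> real) \<Rightarrow> 's \<Rightarrow> 'a \<Rightarrow> real" where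
  "soft_backup SM AM p \<gamma> r Q s a = r s a + \<gamma> * trans_exp SM p s a (soft_V AM Q)"

text \<open>Optimal soft Q-function for reward r: the (unique) bounded fixed point of
  the soft Bellman backup (measurable, so that all integrals are meaningful).\<close>
definition optimal_soft_Q ::
  "'s measure \<Rightarrow> 'a measure \<Rightarrow> ('s \<Rightarrow> 'a \<Rightarrow> 's \<Rightarrow> real) \<Rightarrow> real \<Rightarrow>
   ('s \<Rightarrow> 'a \<Rightarrow> real) \<Rightarrow> ('s \<Rightarrow> 'a \<Rightarrow> real) \<Rightarrow> bool" where
  "optimal_soft_Q SM AM p \<gamma> r Q \<longleftrightarrow>
     bounded_fun2 Q (space SM) (space AM) \<and>
     (\<lambda>(s, a). Q s a) \<in> borel_measurable (SM \<Otimes>\<^sub>M AM) \<and>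
     (\<forall>s\<in>space SM. \<forall>a\<in>space AM. Q s a = soft_backup SM AM p \<gamma> r Q s a)"

definition soft_policy :: "'a measure \<Rightarrow> ('s \<Rightarrow> 'a \<Rightarrow> real) \<Rightarrow> 's \<Rightarrow> 'a \<Rightarrow> real" where
  "soft_policy AM Q s a = exp (Q s a) / (\<integral>a'. exp (Q s a') \<partial>AM)"

definition renyi_half :: "'a measure \<Rightarrow> ('a \<Rightarrow> real) \<Rightarrow> ('a \<Rightarrow> real) \<Rightarrow> real" where
  "renyi_half AM P R = - 2 * ln (\<integral>a. sqrt (P a * R a) \<partial>AM)"

definition C_backup ::
  "'s measure \<Rightarrow> 'a measure \<Rightarrow> ('s \<Rightarrow> 'a \<Rightarrow> 's \<Rightarrow> real) \<Rightarrow> real \<Rightarrow>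
   ('s \<Rightarrow> 'a \<Rightarrow> real) \<Rightarrow> ('s \<Rightarrow> 'a \<Rightarrow> real) \<Rightarrow> ('s \<Rightarrow> 'a \<Rightarrow> real) \<Rightarrow> 's \<Rightarrow> 'a \<Rightarrow> real" where
  "C_backup SM AM p \<gamma> Q1 Q2 C s a =
     \<gamma> * trans_exp SM p s a
       (\<lambda>s'. renyi_half AM (soft_policy AM Q1 s') (soft_policy AM Q2 s')
             + (SUP a'\<in>space AM. C s' a'))"

end

theory Submission imports Defs begin

text \<open>Write \<open>Q\<^sub>\<Sigma>\<close> for the average of the two optimal soft Q-functions and \<open>V\<^sub>1, V\<^sub>2, V\<^sub>\<Sigma>\<close> for
  the soft values. The Renyi divergence of the two optimal soft policies at \<open>s\<close> equals
  \<open>V\<^sub>1 s + V\<^sub>2 s - 2 V\<^sub>\<Sigma> s\<close>, and it is nonnegative because the Bhattacharyya coefficient is at most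
  one (AM-GM). So \<open>V\<^sub>\<Sigma> \<le> (V\<^sub>1 + V\<^sub>2) / 2\<close>, which makes \<open>Q\<^sub>C - Q\<^sub>\<Sigma>\<close> at most \<open>\<gamma>\<close> times its own
  supremum; as \<open>\<gamma> < 1\<close> this forces \<open>Q\<^sub>C \<le> Q\<^sub>\<Sigma>\<close>. Conversely, adding the divergence back, the
  bounded function \<open>Q\<^sub>\<Sigma> - Q\<^sub>C - C\<close> is at most \<open>\<gamma>\<close> times its supremum, so \<open>Q\<^sub>\<Sigma> \<le> Q\<^sub>C + C\<close>.
  Both value inequalities follow since the soft value is monotone and commutes with adding
  constants.\<close>

definition bounded_measurable :: "'s measure \<Rightarrow> ('s \<Rightarrow> real) \<Rightarrow> bool" where
  "bounded_measurable M f \<longleftrightarrow> f \<in> borel_measurable M \<and> (\<exists>B. \<forall>x\<in>space M. \<bar>f x\<bar> \<le> B)"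

definition bounded_measurable2 :: "'s measure \<Rightarrow> 'a measure \<Rightarrow> ('s \<Rightarrow> 'a \<Rightarrow> real) \<Rightarrow> bool" where
  "bounded_measurable2 M N Q \<longleftrightarrow>
     bounded_fun2 Q (space M) (space N) \<and> (\<lambda>(s, a). Q s a) \<in> borel_measurable (M \<Otimes>\<^sub>M N)"

lemma bounded_measurable_add:
  assumes "bounded_measurable M f" "bounded_measurable M g"
  shows "bounded_measurable M (\<lambda>x. f x + g x)"
proof -
  obtain B1 B2 where "\<forall>x\<in>space M. \<bar>f x\<bar> \<le> B1" "\<forall>x\<in>space M. \<bar>g x\<bar> \<le> B2"
    using assms unfolding bounded_measurable_def by blast
  then have "\<forall>x\<in>space M. \<bar>f x + g x\<bar> \<le> B1 + B2"
    by (auto intro: order.trans[OF abs_triangle_ineq] add_mono)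
  with assms show ?thesis unfolding bounded_measurable_def by auto
qed

lemma bounded_measurable_cmult:
  assumes "bounded_measurable M f"
  shows "bounded_measurable M (\<lambda>x. c * f x)"
proof -
  obtain B where "\<forall>x\<in>space M. \<bar>f x\<bar> \<le> B"
    using assms unfolding bounded_measurable_def by blast
  then have "\<forall>x\<in>space M. \<bar>c * f x\<bar> \<le> \<bar>c\<bar> * B"
    by (auto simp: abs_mult intro: mult_left_mono)
  with assms show ?thesis unfolding bounded_measurable_def by auto
qed

lemma bounded_measurable_const: "bounded_measurable M (\<lambda>x. c)"
  unfolding bounded_measurable_def by auto

lemma bounded_measurable_cong:
  "bounded_measurable M f \<Longrightarrow> (\<And>x. x \<in> space M \<Longrightarrow> f x = g x) \<Longrightarrow> bounded_measurable M g"
  unfolding bounded_measurable_def by (metis measurable_cong)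

lemma bounded_measurable2_midpoint:
  assumes "bounded_measurable2 M N Q1" "bounded_measurable2 M N Q2"
  shows "bounded_measurable2 M N (\<lambda>s a. (Q1 s a + Q2 s a) / 2)"
proof -
  obtain B1 B2 where "\<forall>s\<in>space M. \<forall>a\<in>space N. \<bar>Q1 s a\<bar> \<le> B1"
    "\<forall>s\<in>space M. \<forall>a\<in>space N. \<bar>Q2 s a\<bar> \<le> B2"
    and m1: "(\<lambda>(s, a). Q1 s a) \<in> borel_measurable (M \<Otimes>\<^sub>M N)"
    and m2: "(\<lambda>(s, a). Q2 s a) \<in> borel_measurable (M \<Otimes>\<^sub>M N)"
    using assms unfolding bounded_measurable2_def bounded_fun2_def by blast
  then have "bounded_fun2 (\<lambda>s a. (Q1 s a + Q2 s a) / 2) (space M) (space N)"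
    unfolding bounded_fun2_def by (intro exI[of _ "B1 + B2"]) (force simp: abs_le_iff)
  moreover have "(\<lambda>(s, a). (Q1 s a + Q2 s a) / 2) =
      (\<lambda>z. ((\<lambda>(s, a). Q1 s a) z + (\<lambda>(s, a). Q2 s a) z) / 2)"
    by auto
  then have "(\<lambda>(s, a). (Q1 s a + Q2 s a) / 2) \<in> borel_measurable (M \<Otimes>\<^sub>M N)"
    using m1 m2 by simp
  ultimately show ?thesis unfolding bounded_measurable2_def by blast
qed

lemma bounded_fun2_diff:
  assumes "bounded_fun2 f S A" "bounded_fun2 g S A"
  shows "bounded_fun2 (\<lambda>s a. f s a - g s a) S A"
proof -
  obtain B1 B2 where "\<forall>s\<in>S. \<forall>a\<in>A. \<bar>f s a\<bar> \<le> B1" "\<forall>s\<in>S. \<forall>a\<in>A. \<bar>g s a\<bar> \<le> B2"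
    using assms unfolding bounded_fun2_def by blast
  then show ?thesis unfolding bounded_fun2_def by (intro exI[of _ "B1 + B2"]) (force simp: abs_le_iff)
qed

lemma bounded_fun2_bdd_above:
  "bounded_fun2 f S A \<Longrightarrow> \<exists>B. \<forall>z\<in>S \<times> A. (\<lambda>(s, a). f s a) z \<le> B"
  unfolding bounded_fun2_def by (force simp: abs_le_iff)

lemma nonpos_by_contraction:
  fixes h :: "'x \<Rightarrow> real"
  assumes "X \<noteq> {}" and bdd: "\<exists>B. \<forall>x\<in>X. h x \<le> B" and "\<gamma> < 1"
    and contr: "\<And>M. \<forall>x\<in>X. h x \<le> M \<Longrightarrow> \<forall>x\<in>X. h x \<le> \<gamma> * M"
    and "x \<in> X"
  shows "h x \<le> 0"
proof -
  define M where "M = (SUP y\<in>X. h y)"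
  have "bdd_above (h ` X)" using bdd by (auto simp: bdd_above_def)
  then have upper: "\<forall>y\<in>X. h y \<le> M"
    unfolding M_def by (auto intro: cSUP_upper)
  have "M \<le> \<gamma> * M"
    unfolding M_def using contr[OF upper] \<open>X \<noteq> {}\<close> by (intro cSUP_least) (auto simp: M_def)
  with \<open>\<gamma> < 1\<close> have "M \<le> 0" by (smt (verit) mult_le_cancel_right1)
  with upper \<open>x \<in> X\<close> show ?thesis by auto
qed

lemma le_SUP_bounded_fun2:
  assumes "bounded_fun2 C (space M) (space N)" "s \<in> space M" "a \<in> space N"
  shows "C s a \<le> (SUP a\<in>space N. C s a)"
  using assms unfolding bounded_fun2_def
  by (intro cSUP_upper) (auto simp: bdd_above_def abs_le_iff)

lemma bounded_measurable_SUP: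
  assumes "bounded_fun2 C (space M) (space N)" "space N \<noteq> {}"
    and "(\<lambda>s. SUP a\<in>space N. C s a) \<in> borel_measurable M"
  shows "bounded_measurable M (\<lambda>s. SUP a\<in>space N. C s a)"
proof -
  obtain B where B: "\<forall>s\<in>space M. \<forall>a\<in>space N. \<bar>C s a\<bar> \<le> B"
    using assms(1) unfolding bounded_fun2_def by blast
  obtain a where a: "a \<in> space N" using assms(2) by blast
  have "\<bar>SUP a\<in>space N. C s a\<bar> \<le> B" if s: "s \<in> space M" for s
  proof -
    have "(SUP a\<in>space N. C s a) \<le> B"
      using B s assms(2) by (intro cSUP_least) (auto simp: abs_le_iff)
    moreover have "C s a \<le> (SUP a\<in>space N. C s a)"
      by (rule le_SUP_bounded_fun2[OF assms(1) s a])
    ultimately show ?thesis using B s a by (force simp: abs_le_iff)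
  qed
  with assms(3) show ?thesis unfolding bounded_measurable_def by blast
qed

lemma trans_exp_divide: "trans_exp M p s a (\<lambda>x. f x / c) = trans_exp M p s a f / c"
  unfolding trans_exp_def by (simp add: times_divide_eq_right)

locale soft_mdp =
  fixes SM :: "'s measure" and AM :: "'a measure"
    and p :: "'s \<Rightarrow> 'a \<Rightarrow> 's \<Rightarrow> real" and \<gamma> :: real
  assumes discount: "0 \<le> \<gamma>" "\<gamma> < 1"
    and actions_pos: "0 < emeasure AM (space AM)"
    and actions_finite: "emeasure AM (space AM) < \<infinity>"
    and density: "transition_density SM AM p"
begin

sublocale actions: finite_measure AM
  using actions_finite by (intro finite_measureI) auto

lemma actions_nonempty: "space AM \<noteq> {}"
  using actions_pos by auto

lemma optimal_soft_Q_bounded_measurable2: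
  "optimal_soft_Q SM AM p \<gamma> r Q \<Longrightarrow> bounded_measurable2 SM AM Q"
  unfolding optimal_soft_Q_def bounded_measurable2_def by blast

lemma optimal_soft_Q_fixpoint:
  "optimal_soft_Q SM AM p \<gamma> r Q \<Longrightarrow> s \<in> space SM \<Longrightarrow> a \<in> space AM \<Longrightarrow>
    Q s a = r s a + \<gamma> * trans_exp SM p s a (soft_V AM Q)"
  unfolding optimal_soft_Q_def soft_backup_def by blast

lemma integrable_trans_exp:
  assumes "s \<in> space SM" "a \<in> space AM" "bounded_measurable SM f"
  shows "integrable SM (\<lambda>s'. p s a s' * f s')"
proof -
  obtain B where B: "\<forall>x\<in>space SM. \<bar>f x\<bar> \<le> B" and f: "f \<in> borel_measurable SM"
    using assms(3) unfolding bounded_measurable_def by blast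
  have pm: "p s a \<in> borel_measurable SM" and p0: "\<forall>x\<in>space SM. 0 \<le> p s a x"
    and pi: "integrable SM (p s a)"
    using density assms(1,2) unfolding transition_density_def by auto
  show ?thesis
  proof (rule Bochner_Integration.integrable_bound)
    show "integrable SM (\<lambda>x. B * p s a x)" using pi by simp
    show "(\<lambda>s'. p s a s' * f s') \<in> borel_measurable SM" using pm f by measurable
    show "AE x in SM. norm (p s a x * f x) \<le> norm (B * p s a x)"
    proof (rule AE_I2)
      fix x assume x: "x \<in> space SM"
      have "\<bar>p s a x * f x\<bar> = p s a x * \<bar>f x\<bar>" using p0 x by (simp add: abs_mult)
      also have "\<dots> \<le> p s a x * B" using p0 x B by (intro mult_left_mono) auto
      finally show "norm (p s a x * f x) \<le> norm (B * p s a x)" by (simp add: mult.commute)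
    qed
  qed
qed

lemma trans_exp_mono:
  assumes "s \<in> space SM" "a \<in> space AM" "bounded_measurable SM f" "bounded_measurable SM g"
    and le: "\<And>x. x \<in> space SM \<Longrightarrow> f x \<le> g x"
  shows "trans_exp SM p s a f \<le> trans_exp SM p s a g"
  unfolding trans_exp_def
proof (rule integral_mono[OF integrable_trans_exp integrable_trans_exp])
  fix x assume x: "x \<in> space SM"
  have "0 \<le> p s a x" using density assms(1,2) x unfolding transition_density_def by auto
  then show "p s a x * f x \<le> p s a x * g x" using le x by (intro mult_left_mono) auto
qed (use assms in auto)

lemma trans_exp_add:
  assumes "s \<in> space SM" "a \<in> space AM" "bounded_measurable SM f" "bounded_measurable SM g"
  shows "trans_exp SM p s a (\<lambda>x. f x + g x) = trans_exp SM p s a f + trans_exp SM p s a g"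
  unfolding trans_exp_def
  using Bochner_Integration.integral_add[OF integrable_trans_exp[OF assms(1,2,3)] integrable_trans_exp[OF assms(1,2,4)]]
  by (simp add: distrib_left)

lemma trans_exp_const:
  assumes "s \<in> space SM" "a \<in> space AM"
  shows "trans_exp SM p s a (\<lambda>x. c) = c"
proof -
  have "(\<integral>s'. p s a s' \<partial>SM) = 1" using density assms unfolding transition_density_def by auto
  then show ?thesis unfolding trans_exp_def by simp
qed

lemma trans_exp_le_add_const:
  assumes "s \<in> space SM" "a \<in> space AM" "bounded_measurable SM f" "bounded_measurable SM g"
    and "\<And>x. x \<in> space SM \<Longrightarrow> f x \<le> g x + c"
  shows "trans_exp SM p s a f \<le> trans_exp SM p s a g + c"
proof -
  have "trans_exp SM p s a f \<le> trans_exp SM p s a (\<lambda>x. g x + c)"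
    using assms by (intro trans_exp_mono bounded_measurable_add bounded_measurable_const)
  also have "\<dots> = trans_exp SM p s a g + c"
    using assms by (simp add: trans_exp_add bounded_measurable_const trans_exp_const)
  finally show ?thesis .
qed

lemma integrable_exp_Q:
  assumes "bounded_measurable2 SM AM Q" "s \<in> space SM"
  shows "integrable AM (\<lambda>a. exp (Q s a))"
proof -
  obtain B where B: "\<forall>s\<in>space SM. \<forall>a\<in>space AM. \<bar>Q s a\<bar> \<le> B"
    and Q: "(\<lambda>(s, a). Q s a) \<in> borel_measurable (SM \<Otimes>\<^sub>M AM)"
    using assms(1) unfolding bounded_measurable2_def bounded_fun2_def by blast
  have "(\<lambda>a. Q s a) \<in> borel_measurable AM"
    using measurable_Pair2[OF Q assms(2)] by simp
  then show ?thesis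
    using B assms(2)
    by (intro actions.integrable_const_bound[where B="exp B"] AE_I2) (auto simp: abs_le_iff)
qed

lemma partition_bounds:
  assumes "bounded_measurable2 SM AM Q" "s \<in> space SM"
    and B: "\<forall>s\<in>space SM. \<forall>a\<in>space AM. \<bar>Q s a\<bar> \<le> B"
  shows "exp (-B) * measure AM (space AM) \<le> (\<integral>a. exp (Q s a) \<partial>AM)"
    and "(\<integral>a. exp (Q s a) \<partial>AM) \<le> exp B * measure AM (space AM)"
proof -
  note i = integrable_exp_Q[OF assms(1,2)]
  have "(\<integral>a. exp (-B) \<partial>AM) \<le> (\<integral>a. exp (Q s a) \<partial>AM)"
    using B assms(2) i by (intro integral_mono) (force simp: abs_le_iff)+
  then show "exp (-B) * measure AM (space AM) \<le> (\<integral>a. exp (Q s a) \<partial>AM)"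
    by (simp add: mult.commute)
  have "(\<integral>a. exp (Q s a) \<partial>AM) \<le> (\<integral>a. exp B \<partial>AM)"
    using B assms(2) i by (intro integral_mono) (auto simp: abs_le_iff)
  then show "(\<integral>a. exp (Q s a) \<partial>AM) \<le> exp B * measure AM (space AM)"
    by (simp add: mult.commute)
qed

lemma measure_actions_pos: "0 < measure AM (space AM)"
  using actions_pos by (simp add: actions.emeasure_eq_measure)

lemma partition_pos:
  assumes "bounded_measurable2 SM AM Q" "s \<in> space SM"
  shows "0 < (\<integral>a. exp (Q s a) \<partial>AM)"
proof -
  obtain B where B: "\<forall>s\<in>space SM. \<forall>a\<in>space AM. \<bar>Q s a\<bar> \<le> B"
    using assms(1) unfolding bounded_measurable2_def bounded_fun2_def by blast
  have "0 < exp (-B) * measure AM (space AM)" using measure_actions_pos by simp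
  also have "\<dots> \<le> (\<integral>a. exp (Q s a) \<partial>AM)" by (rule partition_bounds(1)[OF assms B])
  finally show ?thesis .
qed

lemma bounded_measurable_soft_V:
  assumes "bounded_measurable2 SM AM Q"
  shows "bounded_measurable SM (soft_V AM Q)"
proof -
  obtain B where B: "\<forall>s\<in>space SM. \<forall>a\<in>space AM. \<bar>Q s a\<bar> \<le> B"
    and Q: "(\<lambda>(s, a). Q s a) \<in> borel_measurable (SM \<Otimes>\<^sub>M AM)"
    using assms unfolding bounded_measurable2_def bounded_fun2_def by blast
  define \<mu> where "\<mu> = measure AM (space AM)"
  have "(\<lambda>s. \<integral>a. exp (Q s a) \<partial>AM) \<in> borel_measurable SM"
    by (rule actions.borel_measurable_lebesgue_integral) (use Q in measurable)
  then have "soft_V AM Q \<in> borel_measurable SM"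
    unfolding soft_V_def[abs_def] by measurable
  moreover have "\<bar>soft_V AM Q s\<bar> \<le> \<bar>B\<bar> + \<bar>ln \<mu>\<bar>" if s: "s \<in> space SM" for s
  proof -
    have l: "exp (-B) * \<mu> \<le> (\<integral>a. exp (Q s a) \<partial>AM)"
      and u: "(\<integral>a. exp (Q s a) \<partial>AM) \<le> exp B * \<mu>"
      using partition_bounds[OF assms s B] unfolding \<mu>_def by auto
    have \<mu>: "0 < \<mu>" unfolding \<mu>_def by (rule measure_actions_pos)
    note Z = partition_pos[OF assms s]
    have "ln (exp (-B) * \<mu>) \<le> soft_V AM Q s"
      unfolding soft_V_def using l Z \<mu> by (subst ln_le_cancel_iff) auto
    moreover have "soft_V AM Q s \<le> ln (exp B * \<mu>)"
      unfolding soft_V_def using u Z \<mu> by (subst ln_le_cancel_iff) auto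
    ultimately
    show ?thesis using \<mu> by (simp add: ln_mult)
  qed
  ultimately show ?thesis unfolding bounded_measurable_def by blast
qed

lemma soft_V_le_shift:
  assumes "bounded_measurable2 SM AM Q" "bounded_measurable2 SM AM Q'" "s \<in> space SM"
    and le: "\<And>a. a \<in> space AM \<Longrightarrow> Q' s a \<le> Q s a + c"
  shows "soft_V AM Q' s \<le> soft_V AM Q s + c"
proof -
  note i = integrable_exp_Q[OF assms(1,3)] and i' = integrable_exp_Q[OF assms(2,3)]
  note z = partition_pos[OF assms(1,3)] and z' = partition_pos[OF assms(2,3)]
  have "(\<integral>a. exp (Q' s a) \<partial>AM) \<le> (\<integral>a. exp c * exp (Q s a) \<partial>AM)"
  proof (rule integral_mono[OF i'])
    show "integrable AM (\<lambda>a. exp c * exp (Q s a))" using i by simp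
    fix a assume "a \<in> space AM"
    then have "Q' s a \<le> c + Q s a" using le by force
    then show "exp (Q' s a) \<le> exp c * exp (Q s a)" by (simp add: exp_add[symmetric])
  qed
  also have "\<dots> = exp c * (\<integral>a. exp (Q s a) \<partial>AM)" by simp
  finally have "ln (\<integral>a. exp (Q' s a) \<partial>AM) \<le> ln (exp c * (\<integral>a. exp (Q s a) \<partial>AM))"
    using z z' by (subst ln_le_cancel_iff) auto
  then show ?thesis unfolding soft_V_def using z by (simp add: ln_mult)
qed

subsection \<open>The Renyi divergence of two soft policies\<close>

context
  fixes Q1 Q2 :: "'s \<Rightarrow> 'a \<Rightarrow> real" and s :: 's
  assumes Q1: "bounded_measurable2 SM AM Q1" and Q2: "bounded_measurable2 SM AM Q2"
    and s: "s \<in> space SM"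
begin

private abbreviation "Z1 \<equiv> \<integral>a. exp (Q1 s a) \<partial>AM"
private abbreviation "Z2 \<equiv> \<integral>a. exp (Q2 s a) \<partial>AM"
private abbreviation "Z\<Sigma> \<equiv> \<integral>a. exp ((Q1 s a + Q2 s a) / 2) \<partial>AM"

private lemma Z_pos: "0 < Z1" "0 < Z2" "0 < Z\<Sigma>"
  using partition_pos[OF Q1 s] partition_pos[OF Q2 s]
    partition_pos[OF bounded_measurable2_midpoint[OF Q1 Q2] s] by auto

private lemma sqrt_soft_policy_product:
  "sqrt (soft_policy AM Q1 s a * soft_policy AM Q2 s a) = exp ((Q1 s a + Q2 s a) / 2) / sqrt (Z1 * Z2)"
proof (rule real_sqrt_unique)
  have "(exp ((Q1 s a + Q2 s a) / 2))\<^sup>2 = exp (Q1 s a) * exp (Q2 s a)"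
    by (simp add: power2_eq_square exp_add[symmetric])
  then show "(exp ((Q1 s a + Q2 s a) / 2) / sqrt (Z1 * Z2))\<^sup>2
      = soft_policy AM Q1 s a * soft_policy AM Q2 s a"
    using Z_pos by (simp add: soft_policy_def power_divide)
qed (use Z_pos in auto)

private lemma bhattacharyya_soft_policy:
  "(\<integral>a. sqrt (soft_policy AM Q1 s a * soft_policy AM Q2 s a) \<partial>AM) = Z\<Sigma> / sqrt (Z1 * Z2)"
  by (simp only: sqrt_soft_policy_product) simp

lemma renyi_half_soft_policy_eq:
  "renyi_half AM (soft_policy AM Q1 s) (soft_policy AM Q2 s)
     = soft_V AM Q1 s + soft_V AM Q2 s - 2 * soft_V AM (\<lambda>s a. (Q1 s a + Q2 s a) / 2) s"
proof -
  have "ln (sqrt (Z1 * Z2)) = (ln Z1 + ln Z2) / 2"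
    using Z_pos by (simp add: ln_sqrt ln_mult)
  then show ?thesis
    unfolding renyi_half_def bhattacharyya_soft_policy soft_V_def
    using Z_pos by (simp add: ln_divide_pos)
qed

lemma renyi_half_soft_policy_nonneg:
  "0 \<le> renyi_half AM (soft_policy AM Q1 s) (soft_policy AM Q2 s)"
proof -
  have ip1: "integrable AM (soft_policy AM Q1 s)" and ip2: "integrable AM (soft_policy AM Q2 s)"
    unfolding soft_policy_def using integrable_exp_Q[OF Q1 s] integrable_exp_Q[OF Q2 s] by simp_all
  have "Z\<Sigma> / sqrt (Z1 * Z2) \<le> (\<integral>a. (soft_policy AM Q1 s a + soft_policy AM Q2 s a) / 2 \<partial>AM)"
    unfolding bhattacharyya_soft_policy[symmetric]
  proof (rule integral_mono)
    show "integrable AM (\<lambda>a. sqrt (soft_policy AM Q1 s a * soft_policy AM Q2 s a))"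
      unfolding sqrt_soft_policy_product
      using integrable_exp_Q[OF bounded_measurable2_midpoint[OF Q1 Q2] s] by simp
    show "integrable AM (\<lambda>a. (soft_policy AM Q1 s a + soft_policy AM Q2 s a) / 2)"
      using ip1 ip2 by simp
    show "sqrt (soft_policy AM Q1 s a * soft_policy AM Q2 s a)
        \<le> (soft_policy AM Q1 s a + soft_policy AM Q2 s a) / 2" for a
      by (rule arith_geo_mean_sqrt) (use Z_pos in \<open>auto simp: soft_policy_def\<close>)
  qed
  also have "\<dots> = ((\<integral>a. soft_policy AM Q1 s a \<partial>AM) + (\<integral>a. soft_policy AM Q2 s a \<partial>AM)) / 2"
    using ip1 ip2 by simp
  also have "\<dots> = 1" using Z_pos by (simp add: soft_policy_def)
  finally have "ln (Z\<Sigma> / sqrt (Z1 * Z2)) \<le> 0" using Z_pos by simp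
  then show ?thesis unfolding renyi_half_def bhattacharyya_soft_policy by simp
qed

end

subsection \<open>Comparison with the optimal soft Q-function of the averaged reward\<close>

context
  fixes r1 r2 Q1 Q2 QC :: "'s \<Rightarrow> 'a \<Rightarrow> real"
  assumes Q1: "optimal_soft_Q SM AM p \<gamma> r1 Q1"
    and Q2: "optimal_soft_Q SM AM p \<gamma> r2 Q2"
    and QC: "optimal_soft_Q SM AM p \<gamma> (\<lambda>s a. (r1 s a + r2 s a) / 2) QC"
begin

private abbreviation "Q\<Sigma> \<equiv> \<lambda>s a. (Q1 s a + Q2 s a) / 2"
private abbreviation "V12 \<equiv> \<lambda>x. (soft_V AM Q1 x + soft_V AM Q2 x) / 2"

private lemma regular:
  "bounded_measurable2 SM AM Q1" "bounded_measurable2 SM AM Q2"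
  "bounded_measurable2 SM AM QC" "bounded_measurable2 SM AM Q\<Sigma>"
  using Q1 Q2 QC by (simp_all add: optimal_soft_Q_bounded_measurable2 bounded_measurable2_midpoint)

private lemma bounded_measurable_V:
  "bounded_measurable SM (soft_V AM QC)" "bounded_measurable SM V12"
  using regular bounded_measurable_soft_V
    bounded_measurable_cmult[of SM "\<lambda>x. soft_V AM Q1 x + soft_V AM Q2 x" "1/2"]
  by (auto intro: bounded_measurable_add)

private lemma midpoint_soft_backup:
  assumes "s \<in> space SM" "a \<in> space AM"
  shows "Q\<Sigma> s a = (r1 s a + r2 s a) / 2 + \<gamma> * trans_exp SM p s a V12"
  using assms regular optimal_soft_Q_fixpoint[OF Q1] optimal_soft_Q_fixpoint[OF Q2]
  by (simp add: trans_exp_divide trans_exp_add bounded_measurable_soft_V field_simps)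

lemma optimal_soft_Q_midpoint_le:
  assumes "s \<in> space SM" "a \<in> space AM"
  shows "QC s a \<le> Q\<Sigma> s a"
proof -
  let ?h = "\<lambda>(s, a). QC s a - Q\<Sigma> s a"
  have "?h (s, a) \<le> 0"
  proof (rule nonpos_by_contraction[where X = "space SM \<times> space AM" and h = ?h and \<gamma> = \<gamma>])
    show "\<exists>B. \<forall>z\<in>space SM \<times> space AM. ?h z \<le> B"
      using regular bounded_fun2_bdd_above[OF bounded_fun2_diff[of QC _ _ Q\<Sigma>]]
      by (simp add: bounded_measurable2_def)
    fix M assume M: "\<forall>z\<in>space SM \<times> space AM. ?h z \<le> M"
    show "\<forall>z\<in>space SM \<times> space AM. ?h z \<le> \<gamma> * M"
    proof clarify
      fix s a assume sa: "s \<in> space SM" "a \<in> space AM"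
      have "soft_V AM QC x \<le> (soft_V AM Q1 x + soft_V AM Q2 x) / 2 + M" if x: "x \<in> space SM" for x
      proof -
        have "soft_V AM QC x \<le> soft_V AM Q\<Sigma> x + M"
        proof (rule soft_V_le_shift[OF regular(4,3) x])
          fix a assume "a \<in> space AM"
          with M x show "QC x a \<le> Q\<Sigma> x a + M" by force
        qed
        moreover have "0 \<le> renyi_half AM (soft_policy AM Q1 x) (soft_policy AM Q2 x)"
          by (rule renyi_half_soft_policy_nonneg[OF regular(1,2) x])
        ultimately show ?thesis
          using renyi_half_soft_policy_eq[OF regular(1,2) x] by (simp add: field_simps)
      qed
      then have E: "trans_exp SM p s a (soft_V AM QC) \<le> trans_exp SM p s a V12 + M"
        using sa bounded_measurable_V by (intro trans_exp_le_add_const)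
      have "QC s a - Q\<Sigma> s a = \<gamma> * (trans_exp SM p s a (soft_V AM QC) - trans_exp SM p s a V12)"
        using optimal_soft_Q_fixpoint[OF QC sa] midpoint_soft_backup[OF sa] by (simp add: algebra_simps)
      also have "\<dots> \<le> \<gamma> * M"
        using E discount(1) by (intro mult_left_mono) auto
      finally show "QC s a - Q\<Sigma> s a \<le> \<gamma> * M" .
    qed
  qed (use assms actions_nonempty discount in auto)
  then show ?thesis by simp
qed

lemma midpoint_le_optimal_soft_Q_add:
  fixes C :: "'s \<Rightarrow> 'a \<Rightarrow> real"
  assumes C_bdd: "bounded_fun2 C (space SM) (space AM)"
    and C_meas: "(\<lambda>s. SUP a\<in>space AM. C s a) \<in> borel_measurable SM"
    and C_fix: "\<forall>s\<in>space SM. \<forall>a\<in>space AM. C s a = C_backup SM AM p \<gamma> Q1 Q2 C s a"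
    and "s \<in> space SM" "a \<in> space AM"
  shows "Q\<Sigma> s a \<le> QC s a + C s a"
proof -
  define D where "D x = renyi_half AM (soft_policy AM Q1 x) (soft_policy AM Q2 x)" for x
  define supC where "supC x = (SUP a\<in>space AM. C x a)" for x
  have D_eq: "D x = soft_V AM Q1 x + soft_V AM Q2 x - 2 * soft_V AM Q\<Sigma> x"
    if "x \<in> space SM" for x
    unfolding D_def using regular that by (simp add: renyi_half_soft_policy_eq)
  have D_nonneg: "0 \<le> D x" if "x \<in> space SM" for x
    unfolding D_def using regular that by (simp add: renyi_half_soft_policy_nonneg)
  have bm_D: "bounded_measurable SM D"
  proof (rule bounded_measurable_cong)
    show "bounded_measurable SM (\<lambda>x. soft_V AM Q1 x + soft_V AM Q2 x + (-2) * soft_V AM Q\<Sigma> x)"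
      using regular by (intro bounded_measurable_add bounded_measurable_cmult bounded_measurable_soft_V)
  qed (simp add: D_eq)
  have bm_supC: "bounded_measurable SM supC"
    unfolding supC_def[abs_def] using C_bdd actions_nonempty C_meas by (rule bounded_measurable_SUP)
  note bm_D_supC = bounded_measurable_add[OF bm_D bm_supC]
  let ?h = "\<lambda>(s, a). Q\<Sigma> s a - QC s a - C s a"
  have "?h (s, a) \<le> 0"
  proof (rule nonpos_by_contraction[where X = "space SM \<times> space AM" and h = ?h and \<gamma> = \<gamma>])
    show "\<exists>B. \<forall>z\<in>space SM \<times> space AM. ?h z \<le> B"
      using regular C_bdd
        bounded_fun2_bdd_above[OF bounded_fun2_diff[OF bounded_fun2_diff[of Q\<Sigma> _ _ QC]]]
      by (simp add: bounded_measurable2_def)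
    fix M assume M: "\<forall>z\<in>space SM \<times> space AM. ?h z \<le> M"
    show "\<forall>z\<in>space SM \<times> space AM. ?h z \<le> \<gamma> * M"
    proof clarify
      fix s a assume sa: "s \<in> space SM" "a \<in> space AM"
      have "(soft_V AM Q1 x + soft_V AM Q2 x) / 2 \<le> (soft_V AM QC x + (D x + supC x)) + M"
        if x: "x \<in> space SM" for x
      proof -
        have "soft_V AM Q\<Sigma> x \<le> soft_V AM QC x + (M + supC x)"
        proof (rule soft_V_le_shift[OF regular(3,4) x])
          fix a assume a: "a \<in> space AM"
          have "Q\<Sigma> x a - QC x a - C x a \<le> M" using M x a by auto
          moreover have "C x a \<le> supC x"
            unfolding supC_def by (rule le_SUP_bounded_fun2[OF C_bdd x a])
          ultimately show "Q\<Sigma> x a \<le> QC x a + (M + supC x)" by linarith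
        qed
        then show ?thesis using D_eq[OF x] D_nonneg[OF x] by (simp add: field_simps)
      qed
      then have "trans_exp SM p s a V12
          \<le> trans_exp SM p s a (\<lambda>x. soft_V AM QC x + (D x + supC x)) + M"
        using sa bounded_measurable_V bm_D bm_supC
        by (intro trans_exp_le_add_const bounded_measurable_add)
      also have "\<dots> = trans_exp SM p s a (soft_V AM QC) + trans_exp SM p s a (\<lambda>x. D x + supC x) + M"
        using sa bounded_measurable_V bm_D_supC by (simp add: trans_exp_add)
      finally have E: "trans_exp SM p s a V12 - trans_exp SM p s a (soft_V AM QC)
          - trans_exp SM p s a (\<lambda>x. D x + supC x) \<le> M"
        by simp
      have "C s a = C_backup SM AM p \<gamma> Q1 Q2 C s a" using C_fix sa by blast
      then have "C s a = \<gamma> * trans_exp SM p s a (\<lambda>x. D x + supC x)"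
        by (simp only: C_backup_def D_def supC_def)
      then have "Q\<Sigma> s a - QC s a - C s a = \<gamma> * (trans_exp SM p s a V12
          - trans_exp SM p s a (soft_V AM QC) - trans_exp SM p s a (\<lambda>x. D x + supC x))"
        using optimal_soft_Q_fixpoint[OF QC sa] midpoint_soft_backup[OF sa] by (simp add: algebra_simps)
      also have "\<dots> \<le> \<gamma> * M"
        using E discount(1) by (intro mult_left_mono)
      finally show "Q\<Sigma> s a - QC s a - C s a \<le> \<gamma> * M" .
    qed
  qed (use assms actions_nonempty discount in auto)
  then have "Q\<Sigma> s a - QC s a - C s a \<le> 0" by simp
  then show ?thesis by linarith
qed

end

end

theorem corollary1:
  fixes SM :: "'s measure" and AM :: "'a measure"
    and p :: "'s \<Rightarrow> 'a \<Rightarrow> 's \<Rightarrow> real" and \<gamma> :: real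
    and r1 r2 Q1 Q2 QC C :: "'s \<Rightarrow> 'a \<Rightarrow> real"
  assumes gamma: "0 < \<gamma>" "\<gamma> < 1"
    and MA_fin: "0 < emeasure AM (space AM)" "emeasure AM (space AM) < \<infinity>"
    and p: "transition_density SM AM p"
    and r1: "bounded_fun2 r1 (space SM) (space AM)"
            "(\<lambda>(s, a). r1 s a) \<in> borel_measurable (SM \<Otimes>\<^sub>M AM)"
    and r2: "bounded_fun2 r2 (space SM) (space AM)"
            "(\<lambda>(s, a). r2 s a) \<in> borel_measurable (SM \<Otimes>\<^sub>M AM)"
    and Q1: "optimal_soft_Q SM AM p \<gamma> r1 Q1"
    and Q2: "optimal_soft_Q SM AM p \<gamma> r2 Q2"
    and QC: "optimal_soft_Q SM AM p \<gamma> (\<lambda>s a. (r1 s a + r2 s a) / 2) QC"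
    and C_bdd: "bounded_fun2 C (space SM) (space AM)"
    and C_meas: "(\<lambda>s. SUP a\<in>space AM. C s a) \<in> borel_measurable SM"
    and C_fix: "\<forall>s\<in>space SM. \<forall>a\<in>space AM. C s a = C_backup SM AM p \<gamma> Q1 Q2 C s a"
  shows "\<forall>s\<in>space SM.
           soft_V AM (\<lambda>s a. (Q1 s a + Q2 s a) / 2) s \<ge> soft_V AM QC s \<and>
           soft_V AM QC s \<ge> soft_V AM (\<lambda>s a. (Q1 s a + Q2 s a) / 2) s - (SUP a\<in>space AM. C s a)"
proof
  fix s assume s: "s \<in> space SM"
  interpret soft_mdp SM AM p \<gamma>
    using gamma MA_fin p by unfold_locales auto
  have QC_reg: "bounded_measurable2 SM AM QC"
    and Q\<Sigma>_reg: "bounded_measurable2 SM AM (\<lambda>s a. (Q1 s a + Q2 s a) / 2)"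
    using Q1 Q2 QC by (simp_all add: optimal_soft_Q_bounded_measurable2 bounded_measurable2_midpoint)
  have "soft_V AM QC s \<le> soft_V AM (\<lambda>s a. (Q1 s a + Q2 s a) / 2) s + 0"
    using optimal_soft_Q_midpoint_le[OF Q1 Q2 QC s]
    by (intro soft_V_le_shift[OF Q\<Sigma>_reg QC_reg s]) simp
  moreover have "soft_V AM (\<lambda>s a. (Q1 s a + Q2 s a) / 2) s
      \<le> soft_V AM QC s + (SUP a\<in>space AM. C s a)"
  proof (rule soft_V_le_shift[OF QC_reg Q\<Sigma>_reg s])
    fix a assume a: "a \<in> space AM"
    show "(Q1 s a + Q2 s a) / 2 \<le> QC s a + (SUP a\<in>space AM. C s a)"
      using midpoint_le_optimal_soft_Q_add[OF Q1 Q2 QC C_bdd C_meas C_fix s a]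
        le_SUP_bounded_fun2[OF C_bdd s a] by simp
  qed
  ultimately show "soft_V AM (\<lambda>s a. (Q1 s a + Q2 s a) / 2) s \<ge> soft_V AM QC s \<and>
      soft_V AM QC s \<ge> soft_V AM (\<lambda>s a. (Q1 s a + Q2 s a) / 2) s - (SUP a\<in>space AM. C s a)"
    by simp
qed

end
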